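(* Let $1\le p<\infty$. Every lattice homomorphism on $\ell^p$ (with the coordinatewise order) has a non-trivial closed invariant subspace which is an ideal.
   Context: On $\ell^p$, $x\ge0$ means all coordinates are real and nonnegative, and lattice operations are coordinatewise. A lattice homomorphism is a bounded positive operator $T$ with $T(x\vee y)=Tx\vee Ty$. An ideal is a linear subspace $M$ such that $|x|\le|y|$ coordinatewise and $y\in M$ imply $x\in M$. Non-trivial means different from $\{0\}$ and $\ell^p$. *)

theory Defs
  imports "HOL-Analysis.Analysis"
begin

definition lp :: "real \<Rightarrow> (nat \<Rightarrow> real) set" where
  "lp p = {x. summable (\<lambda>n. \<bar>x n\<bar> powr p)}"

definition lp_norm :: "real \<Rightarrow> (nat \<Rightarrow> real) \<Rightarrow> real" where
  "lp_norm p x = (\<Sum>n. \<bar>x n\<bar> powr p) powr (1 / p)"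

text \<open>Bounded linear operator on l^p (only its values on l^p matter).\<close>
definition lp_bounded_linear :: "real \<Rightarrow> ((nat \<Rightarrow> real) \<Rightarrow> (nat \<Rightarrow> real)) \<Rightarrow> bool" where
  "lp_bounded_linear p T \<longleftrightarrow>
     (\<forall>x\<in>lp p. T x \<in> lp p) \<and>
     (\<forall>x\<in>lp p. \<forall>y\<in>lp p. \<forall>a b::real.
        T (\<lambda>n. a * x n + b * y n) = (\<lambda>n. a * T x n + b * T y n)) \<and>
     (\<exists>C. \<forall>x\<in>lp p. lp_norm p (T x) \<le> C * lp_norm p x)"

definition lp_positive :: "real \<Rightarrow> ((nat \<Rightarrow> real) \<Rightarrow> (nat \<Rightarrow> real)) \<Rightarrow> bool" where
  "lp_positive p T \<longleftrightarrow> (\<forall>x\<in>lp p. (\<forall>n. 0 \<le> x n) \<longrightarrow> (\<forall>n. 0 \<le> T x n))"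

definition lp_lattice_hom :: "real \<Rightarrow> ((nat \<Rightarrow> real) \<Rightarrow> (nat \<Rightarrow> real)) \<Rightarrow> bool" where
  "lp_lattice_hom p T \<longleftrightarrow> lp_bounded_linear p T \<and> lp_positive p T \<and>
     (\<forall>x\<in>lp p. \<forall>y\<in>lp p. T (\<lambda>n. max (x n) (y n)) = (\<lambda>n. max (T x n) (T y n)))"

definition lp_ideal :: "real \<Rightarrow> (nat \<Rightarrow> real) set \<Rightarrow> bool" where
  "lp_ideal p M \<longleftrightarrow> M \<subseteq> lp p \<and> (\<lambda>n. 0) \<in> M \<and>
     (\<forall>x\<in>M. \<forall>y\<in>M. \<forall>a b::real. (\<lambda>n. a * x n + b * y n) \<in> M) \<and>
     (\<forall>x y. y \<in> M \<longrightarrow> (\<forall>n. \<bar>x n\<bar> \<le> \<bar>y n\<bar>) \<longrightarrow> x \<in> M)"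

definition lp_closed :: "real \<Rightarrow> (nat \<Rightarrow> real) set \<Rightarrow> bool" where
  "lp_closed p M \<longleftrightarrow>
     (\<forall>f x. (\<forall>k. f k \<in> M) \<longrightarrow> x \<in> lp p \<longrightarrow>
        (\<lambda>k. lp_norm p (\<lambda>n. f k n - x n)) \<longlonglongrightarrow> 0 \<longrightarrow> x \<in> M)"

end

theory Submission
  imports Defs
begin

text \<open>
  Let \<open>e\<^sub>j\<close> be the unit vectors. Since \<open>T\<close> preserves \<open>\<or>\<close> and \<open>e\<^sub>i \<or> e\<^sub>j = e\<^sub>i + e\<^sub>j\<close> for
  \<open>i \<noteq> j\<close>, for every coordinate \<open>n\<close> there is at most one \<open>j\<close> with \<open>(T e\<^sub>j) n > 0\<close>;
  write \<open>n \<rightarrow> j\<close> in that case. By positivity and continuity, \<open>(T x) n\<close> vanishes whenever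
  \<open>x\<close> vanishes at all successors of \<open>n\<close>. A partial function on \<open>\<nat>\<close> always has a
  nonempty proper set \<open>C\<close> closed under successors (a point without successor, or the
  forward orbit of a point, which cannot exhaust \<open>\<nat>\<close> without being finite). The sequences
  vanishing on \<open>C\<close> then form the required closed invariant ideal.
\<close>

lemma lp_zero: "(\<lambda>n. 0) \<in> lp p"
  unfolding lp_def by simp

lemma lp_dominated:
  assumes "p > 0" "x \<in> lp p" "\<And>n. \<bar>y n\<bar> \<le> \<bar>x n\<bar>"
  shows "y \<in> lp p"
proof -
  have "summable (\<lambda>n. \<bar>x n\<bar> powr p)"
    using assms(2) by (simp add: lp_def)
  moreover have "norm (\<bar>y n\<bar> powr p) \<le> \<bar>x n\<bar> powr p" for n
    using assms(1,3) by (simp add: powr_mono2)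
  ultimately show ?thesis
    unfolding lp_def by (simp add: summable_comparison_test')
qed

definition unit_seq :: "nat \<Rightarrow> nat \<Rightarrow> real" where
  "unit_seq j = (\<lambda>k. if k = j then 1 else 0)"

lemma unit_seq_in_lp: "unit_seq j \<in> lp p"
proof -
  have "(\<lambda>n. \<bar>unit_seq j n\<bar> powr p) = (\<lambda>n. if n \<in> {j} then 1 else 0)"
    by (auto simp: unit_seq_def)
  then show ?thesis
    unfolding lp_def by simp
qed

lemma lp_linear_combination:
  assumes "p > 0" "x \<in> lp p" "y \<in> lp p"
  shows "(\<lambda>n. a * x n + b * y n) \<in> lp p"
proof -
  have majorant: "summable (\<lambda>n. 2 powr p * (\<bar>a\<bar> powr p * \<bar>x n\<bar> powr p + \<bar>b\<bar> powr p * \<bar>y n\<bar> powr p))"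
    using assms(2,3) by (intro summable_mult summable_add) (auto simp: lp_def)
  have bound: "norm (\<bar>a * x n + b * y n\<bar> powr p)
      \<le> 2 powr p * (\<bar>a\<bar> powr p * \<bar>x n\<bar> powr p + \<bar>b\<bar> powr p * \<bar>y n\<bar> powr p)" for n
  proof -
    define m where "m = max \<bar>a * x n\<bar> \<bar>b * y n\<bar>"
    have "\<bar>a * x n + b * y n\<bar> \<le> 2 * m"
      unfolding m_def by linarith
    then have "\<bar>a * x n + b * y n\<bar> powr p \<le> (2 * m) powr p"
      using assms(1) by (simp add: powr_mono2)
    also have "\<dots> = 2 powr p * m powr p"
      unfolding m_def by (simp add: powr_mult)
    also have "m powr p \<le> \<bar>a * x n\<bar> powr p + \<bar>b * y n\<bar> powr p"
      unfolding m_def by (simp add: max_def)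
    finally show ?thesis
      by (simp add: abs_mult powr_mult)
  qed
  show ?thesis
    unfolding lp_def using summable_comparison_test'[OF majorant bound] by simp
qed

lemma abs_le_lp_norm:
  assumes "p > 0" "y \<in> lp p"
  shows "\<bar>y n\<bar> \<le> lp_norm p y"
proof -
  have "summable (\<lambda>n. \<bar>y n\<bar> powr p)"
    using assms(2) by (simp add: lp_def)
  from sum_le_suminf[OF this, of "{n}"]
  have "\<bar>y n\<bar> powr p \<le> (\<Sum>k. \<bar>y k\<bar> powr p)"
    by simp
  then have "(\<bar>y n\<bar> powr p) powr (1/p) \<le> (\<Sum>k. \<bar>y k\<bar> powr p) powr (1/p)"
    using assms(1) by (simp add: powr_mono2)
  then show ?thesis
    using assms(1) by (simp add: lp_norm_def powr_powr)
qed

lemma lp_norm_tail_tendsto_zero: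
  assumes "p > 0" "x \<in> lp p"
  shows "(\<lambda>N. lp_norm p (\<lambda>k. if k < N then 0 else x k)) \<longlonglongrightarrow> 0"
proof -
  define f where "f k = \<bar>x k\<bar> powr p" for k
  have f: "summable f"
    using assms(2) unfolding lp_def f_def[abs_def] by simp
  have tail_summable: "summable (\<lambda>k. \<bar>if k < N then 0 else x k\<bar> powr p)" for N
    by (rule summable_comparison_test'[OF f]) (auto simp: f_def)
  have tail_eq: "(\<Sum>k. \<bar>if k < N then 0 else x k\<bar> powr p) = (\<Sum>k. f (k + N))" for N
    using suminf_split_initial_segment[OF tail_summable, of N N] by (simp add: f_def)
  have "(\<lambda>N. \<Sum>k. \<bar>if k < N then 0 else x k\<bar> powr p) \<longlonglongrightarrow> 0"
    unfolding tail_eq by (rule suminf_exist_split2[OF f])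
  moreover have "\<forall>\<^sub>F N in sequentially. 0 \<le> (\<Sum>k. \<bar>if k < N then 0 else x k\<bar> powr p)"
    using tail_summable by (intro always_eventually allI suminf_nonneg) auto
  ultimately have "(\<lambda>N. (\<Sum>k. \<bar>if k < N then 0 else x k\<bar> powr p) powr (1/p)) \<longlonglongrightarrow> 0"
    using assms(1) by (intro tendsto_zero_powrI[OF _ tendsto_const]) auto
  then show ?thesis
    unfolding lp_norm_def .
qed

lemma lp_bounded_linear_combination:
  assumes "lp_bounded_linear p T" "x \<in> lp p" "y \<in> lp p"
  shows "T (\<lambda>n. a * x n + b * y n) = (\<lambda>n. a * T x n + b * T y n)"
  using assms unfolding lp_bounded_linear_def by blast

lemma lp_bounded_linear_in_lp:
  assumes "lp_bounded_linear p T" "x \<in> lp p"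
  shows "T x \<in> lp p"
  using assms unfolding lp_bounded_linear_def by blast

lemma lp_bounded_linear_zero:
  assumes "lp_bounded_linear p T"
  shows "T (\<lambda>k. 0) = (\<lambda>k. 0)"
  using lp_bounded_linear_combination[OF assms lp_zero lp_zero, where a = 0 and b = 0] by simp

lemma lp_bounded_linear_tail_coord_tendsto_zero:
  assumes "p > 0" "lp_bounded_linear p T" "x \<in> lp p"
  shows "(\<lambda>N. T (\<lambda>k. if k < N then 0 else x k) n) \<longlonglongrightarrow> 0"
proof -
  define tail where "tail N = (\<lambda>k. if k < N then 0 else x k)" for N
  obtain C where C: "\<forall>y\<in>lp p. lp_norm p (T y) \<le> C * lp_norm p y"
    using assms(2) unfolding lp_bounded_linear_def by blast
  have tail_in_lp: "tail N \<in> lp p" for N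
    by (rule lp_dominated[OF assms(1,3)]) (simp add: tail_def)
  have bound: "norm (T (tail N) n) \<le> C * lp_norm p (tail N)" for N
  proof -
    have "norm (T (tail N) n) \<le> lp_norm p (T (tail N))"
      using abs_le_lp_norm[OF assms(1) lp_bounded_linear_in_lp[OF assms(2) tail_in_lp]] by simp
    also have "\<dots> \<le> C * lp_norm p (tail N)"
      using C tail_in_lp by (rule bspec)
    finally show ?thesis .
  qed
  have majorant: "(\<lambda>N. C * lp_norm p (tail N)) \<longlonglongrightarrow> 0"
    using tendsto_mult_right_zero[OF lp_norm_tail_tendsto_zero[OF assms(1,3)]]
    unfolding tail_def .
  have "(\<lambda>N. T (tail N) n) \<longlonglongrightarrow> 0"
    by (rule Lim_null_comparison[OF always_eventually majorant]) (use bound in blast)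
  then show ?thesis
    unfolding tail_def .
qed

text \<open>
  On finitely supported sequences this is linearity together with \<open>(T e\<^sub>j) n \<ge> 0\<close>;
  the tails are handled by continuity.
\<close>

lemma lp_positive_coord_eq_zero:
  assumes "p > 0" "lp_bounded_linear p T" "lp_positive p T" "x \<in> lp p"
    and support: "\<And>j. T (unit_seq j) n > 0 \<Longrightarrow> x j = 0"
  shows "T x n = 0"
proof -
  define head where "head N = (\<lambda>k. if k < N then x k else 0)" for N
  define tail where "tail N = (\<lambda>k. if k < N then 0 else x k)" for N
  have head_in_lp: "head N \<in> lp p" and tail_in_lp: "tail N \<in> lp p" for N
    by (rule lp_dominated[OF assms(1,4)]; simp add: head_def tail_def)+
  have head_zero: "T (head N) n = 0" for N
  proof (induction N)
    case 0
    then show ?case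
      using lp_bounded_linear_zero[OF assms(2)] by (simp add: head_def)
  next
    case (Suc N)
    have "head (Suc N) = (\<lambda>k. 1 * head N k + x N * unit_seq N k)"
      by (auto simp: head_def unit_seq_def less_Suc_eq)
    then have "T (head (Suc N)) n = T (head N) n + x N * T (unit_seq N) n"
      using lp_bounded_linear_combination[OF assms(2) head_in_lp unit_seq_in_lp, where a = 1 and b = "x N"]
      by simp
    moreover have "T (unit_seq N) n \<ge> 0"
      using assms(3) unit_seq_in_lp by (auto simp: lp_positive_def unit_seq_def)
    then have "x N * T (unit_seq N) n = 0"
      using support[of N] by force
    ultimately show ?case
      using Suc.IH by simp
  qed
  have coord_eq_tail: "T x n = T (tail N) n" for N
  proof -
    have "x = (\<lambda>k. 1 * head N k + 1 * tail N k)"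
      by (auto simp: head_def tail_def)
    then have "T x = (\<lambda>k. T (head N) k + T (tail N) k)"
      using lp_bounded_linear_combination[OF assms(2) head_in_lp tail_in_lp, where a = 1 and b = 1]
      by simp
    then show ?thesis
      using head_zero by simp
  qed
  have "(\<lambda>N. T (tail N) n) \<longlonglongrightarrow> 0"
    unfolding tail_def by (rule lp_bounded_linear_tail_coord_tendsto_zero[OF assms(1,2,4)])
  then have "(\<lambda>N. T x n) \<longlonglongrightarrow> 0"
    unfolding coord_eq_tail[symmetric] .
  then show ?thesis
    by (simp add: LIMSEQ_const_iff)
qed

lemma lp_lattice_hom_unit_support_unique:
  assumes "lp_lattice_hom p T" "T (unit_seq i) n > 0" "T (unit_seq j) n > 0"
  shows "i = j"
proof (rule ccontr)
  assume "i \<noteq> j"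
  then have "(\<lambda>k. max (unit_seq i k) (unit_seq j k)) = (\<lambda>k. 1 * unit_seq i k + 1 * unit_seq j k)"
    by (auto simp: unit_seq_def)
  moreover have "T (\<lambda>k. max (unit_seq i k) (unit_seq j k))
      = (\<lambda>k. max (T (unit_seq i) k) (T (unit_seq j) k))"
    using assms(1) unit_seq_in_lp unfolding lp_lattice_hom_def by blast
  moreover have "T (\<lambda>k. 1 * unit_seq i k + 1 * unit_seq j k)
      = (\<lambda>k. 1 * T (unit_seq i) k + 1 * T (unit_seq j) k)"
    using assms(1) unfolding lp_lattice_hom_def
    by (blast intro: lp_bounded_linear_combination unit_seq_in_lp)
  ultimately have "(\<lambda>k. max (T (unit_seq i) k) (T (unit_seq j) k))
      = (\<lambda>k. T (unit_seq i) k + T (unit_seq j) k)"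
    by simp
  from fun_cong[OF this, of n] show False
    using assms(2,3) by (simp add: max_def split: if_splits)
qed

text \<open>The orbit is taken without its starting point: otherwise the shift \<open>Suc\<close> would be a counterexample.\<close>

lemma range_funpow_Suc_not_UNIV:
  fixes \<sigma> :: "'a \<Rightarrow> 'a"
  assumes "infinite (UNIV :: 'a set)"
  shows "range (\<lambda>m. (\<sigma> ^^ Suc m) a) \<noteq> UNIV"
proof
  assume orbit: "range (\<lambda>m. (\<sigma> ^^ Suc m) a) = UNIV"
  then have "a \<in> range (\<lambda>m. (\<sigma> ^^ Suc m) a)"
    by simp
  then obtain m where "a = (\<sigma> ^^ Suc m) a"
    by (rule rangeE)
  then have period: "(\<sigma> ^^ Suc m) a = a"
    by (rule sym)
  have orbit_in_period: "(\<sigma> ^^ Suc k) a \<in> (\<lambda>i. (\<sigma> ^^ i) a) ` {..<Suc m}" for k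
  proof (rule image_eqI)
    show "(\<sigma> ^^ Suc k) a = (\<sigma> ^^ (Suc k mod Suc m)) a"
      using funpow_mod_eq[OF period] by simp
  qed simp
  have "finite (range (\<lambda>m. (\<sigma> ^^ Suc m) a))"
    by (rule finite_subset[of _ "(\<lambda>i. (\<sigma> ^^ i) a) ` {..<Suc m}"])
      (use orbit_in_period in auto)
  then show False
    using orbit assms by simp
qed

lemma exists_nonempty_proper_successor_closed:
  fixes R :: "'a \<Rightarrow> 'a \<Rightarrow> bool"
  assumes "infinite (UNIV :: 'a set)"
    and functional: "\<And>n i j. R n i \<Longrightarrow> R n j \<Longrightarrow> i = j"
  shows "\<exists>C. C \<noteq> {} \<and> C \<noteq> UNIV \<and> (\<forall>n\<in>C. \<forall>j. R n j \<longrightarrow> j \<in> C)"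
proof (cases "\<exists>d. \<forall>j. \<not> R d j")
  case True
  then obtain d where "\<forall>j. \<not> R d j"
    by blast
  moreover have "{d} \<noteq> UNIV"
    using assms(1) by (metis finite.emptyI finite.insertI)
  ultimately show ?thesis
    by blast
next
  case False
  define \<sigma> where "\<sigma> n = (SOME j. R n j)" for n
  have R_\<sigma>: "R n (\<sigma> n)" for n
    using False unfolding \<sigma>_def by (blast intro: someI)
  define C where "C = range (\<lambda>m. (\<sigma> ^^ Suc m) undefined)"
  have "j \<in> C" if "n \<in> C" "R n j" for n j
  proof -
    obtain m where "n = (\<sigma> ^^ Suc m) undefined"
      using \<open>n \<in> C\<close> unfolding C_def by blast
    moreover have "j = \<sigma> n"
      using functional[OF \<open>R n j\<close> R_\<sigma>] .
    ultimately have "j = (\<sigma> ^^ Suc (Suc m)) undefined"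
      by simp
    then show ?thesis
      unfolding C_def by blast
  qed
  moreover have "C \<noteq> {}" "C \<noteq> UNIV"
    unfolding C_def using range_funpow_Suc_not_UNIV[OF assms(1)] by auto
  ultimately show ?thesis
    by blast
qed

definition lp_vanishing :: "real \<Rightarrow> nat set \<Rightarrow> (nat \<Rightarrow> real) set" where
  "lp_vanishing p C = {x \<in> lp p. \<forall>n\<in>C. x n = 0}"

lemma lp_ideal_vanishing:
  assumes "p > 0"
  shows "lp_ideal p (lp_vanishing p C)"
  unfolding lp_ideal_def
proof (intro conjI allI ballI impI)
  fix x y
  assume y: "y \<in> lp_vanishing p C" and dominated: "\<forall>n. \<bar>x n\<bar> \<le> \<bar>y n\<bar>"
  have "y \<in> lp p"
    using y by (simp add: lp_vanishing_def)
  then have "x \<in> lp p"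
    by (rule lp_dominated[OF assms]) (use dominated in blast)
  moreover have "x n = 0" if "n \<in> C" for n
    using y dominated[rule_format, of n] that by (simp add: lp_vanishing_def)
  ultimately show "x \<in> lp_vanishing p C"
    by (simp add: lp_vanishing_def)
qed (auto simp: lp_vanishing_def lp_zero lp_linear_combination[OF assms])

lemma lp_closed_vanishing:
  assumes "p > 0"
  shows "lp_closed p (lp_vanishing p C)"
  unfolding lp_closed_def
proof (intro allI impI)
  fix f x
  assume f: "\<forall>k. f k \<in> lp_vanishing p C" and "x \<in> lp p"
    and lim: "(\<lambda>k. lp_norm p (\<lambda>n. f k n - x n)) \<longlonglongrightarrow> 0"
  have "x n = 0" if "n \<in> C" for n
  proof -
    have "\<bar>x n\<bar> \<le> lp_norm p (\<lambda>m. f k m - x m)" for k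
    proof -
      have "f k \<in> lp p" "f k n = 0"
        using f \<open>n \<in> C\<close> unfolding lp_vanishing_def by auto
      moreover have "(\<lambda>m. f k m - x m) \<in> lp p"
        using lp_linear_combination[OF assms \<open>f k \<in> lp p\<close> \<open>x \<in> lp p\<close>, where a = 1 and b = "-1"]
        by simp
      ultimately show ?thesis
        using abs_le_lp_norm[OF assms, of "\<lambda>m. f k m - x m" n] by simp
    qed
    then have "\<bar>x n\<bar> \<le> 0"
      by (intro LIMSEQ_le_const[OF lim]) auto
    then show ?thesis
      by simp
  qed
  then show "x \<in> lp_vanishing p C"
    using \<open>x \<in> lp p\<close> unfolding lp_vanishing_def by blast
qed

lemma lp_vanishing_ne_zero:
  assumes "C \<noteq> UNIV"
  shows "lp_vanishing p C \<noteq> {\<lambda>n. 0}"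
proof -
  obtain k where "k \<notin> C"
    using assms by blast
  then have "unit_seq k \<in> lp_vanishing p C"
    using unit_seq_in_lp by (auto simp: lp_vanishing_def unit_seq_def)
  moreover have "unit_seq k \<noteq> (\<lambda>n. 0)"
    by (metis unit_seq_def zero_neq_one)
  ultimately show ?thesis
    by blast
qed

lemma lp_vanishing_ne_lp:
  assumes "C \<noteq> {}"
  shows "lp_vanishing p C \<noteq> lp p"
proof -
  obtain c where "c \<in> C"
    using assms by blast
  then have "unit_seq c \<notin> lp_vanishing p C"
    by (simp add: lp_vanishing_def unit_seq_def)
  then show ?thesis
    using unit_seq_in_lp by blast
qed

lemma lp_vanishing_invariant:
  assumes "p > 0" "lp_bounded_linear p T" "lp_positive p T"
    and closed: "\<And>n j. n \<in> C \<Longrightarrow> T (unit_seq j) n > 0 \<Longrightarrow> j \<in> C"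
    and "x \<in> lp_vanishing p C"
  shows "T x \<in> lp_vanishing p C"
proof -
  have "x \<in> lp p"
    using assms(5) by (simp add: lp_vanishing_def)
  moreover have "T x n = 0" if "n \<in> C" for n
    using lp_positive_coord_eq_zero[OF assms(1-3) \<open>x \<in> lp p\<close>] closed[OF that] assms(5)
    by (auto simp: lp_vanishing_def)
  ultimately show ?thesis
    using lp_bounded_linear_in_lp[OF assms(2)] by (simp add: lp_vanishing_def)
qed

theorem corollary3p6:
  fixes p :: real and T :: "(nat \<Rightarrow> real) \<Rightarrow> (nat \<Rightarrow> real)"
  assumes "1 \<le> p" and "lp_lattice_hom p T"
  shows "\<exists>M. lp_ideal p M \<and> lp_closed p M \<and> (\<forall>x\<in>M. T x \<in> M) \<and>
             M \<noteq> {\<lambda>n. 0} \<and> M \<noteq> lp p"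
proof -
  have p: "p > 0"
    using assms(1) by simp
  have T: "lp_bounded_linear p T" "lp_positive p T"
    using assms(2) unfolding lp_lattice_hom_def by auto
  have "\<exists>C. C \<noteq> {} \<and> C \<noteq> UNIV \<and> (\<forall>n\<in>C. \<forall>j. T (unit_seq j) n > 0 \<longrightarrow> j \<in> C)"
    by (rule exists_nonempty_proper_successor_closed[OF infinite_UNIV_nat])
      (rule lp_lattice_hom_unit_support_unique[OF assms(2)])
  then obtain C where "C \<noteq> {}" "C \<noteq> UNIV"
    and closed: "\<And>n j. n \<in> C \<Longrightarrow> T (unit_seq j) n > 0 \<Longrightarrow> j \<in> C"
    by blast
  show ?thesis
  proof (intro exI[of _ "lp_vanishing p C"] conjI ballI)
    show "lp_ideal p (lp_vanishing p C)"
      by (rule lp_ideal_vanishing[OF p])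
    show "lp_closed p (lp_vanishing p C)"
      by (rule lp_closed_vanishing[OF p])
    show "T x \<in> lp_vanishing p C" if "x \<in> lp_vanishing p C" for x
      by (rule lp_vanishing_invariant[OF p T closed that])
    show "lp_vanishing p C \<noteq> {\<lambda>n. 0}"
      by (rule lp_vanishing_ne_zero[OF \<open>C \<noteq> UNIV\<close>])
    show "lp_vanishing p C \<noteq> lp p"
      by (rule lp_vanishing_ne_lp[OF \<open>C \<noteq> {}\<close>])
  qed
qed

end
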